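(* For every $\delta\in\mathbb N$, there exist $\varepsilon > 1/4$ and a blowup $H$ of a 5-cycle with minimum degree at least $\delta$ such that $\sum_{v\in V(H)}1/(d(v) + \varepsilon) > 2$.
   Context: A blowup of a graph $F$ is a graph obtained from $F$ by replacing some vertices with cliques and replacing each edge by the complete bipartite graph between the corresponding vertex sets (i.e., vertices $x$ of $F$ are replaced by pairwise disjoint nonempty cliques $Q_x$, and for each edge $xy$ of $F$ every vertex of $Q_x$ is adjacent to every vertex of $Q_y$, with no other edges). $d(v)$ is the degree of $v$ in $H$. *)

theory Defs
  imports Main "HOL-Analysis.Analysis"
begin

definition c5_adj :: "nat \<Rightarrow> nat \<Rightarrow> bool" where
  "c5_adj x y \<longleftrightarrow> x < 5 \<and> y < 5 \<and> (y = (x + 1) mod 5 \<or> x = (y + 1) mod 5)"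

definition blowup_C5 :: "'a set \<Rightarrow> ('a \<Rightarrow> 'a \<Rightarrow> bool) \<Rightarrow> bool" where
  "blowup_C5 V E \<longleftrightarrow> finite V \<and>
     (\<forall>u v. E u v \<longrightarrow> u \<in> V \<and> v \<in> V) \<and>
     (\<exists>f. (\<forall>v\<in>V. f v < (5::nat)) \<and> (\<forall>x<5. \<exists>v\<in>V. f v = x) \<and>
          (\<forall>u\<in>V. \<forall>v\<in>V. E u v \<longleftrightarrow> u \<noteq> v \<and> (f u = f v \<or> c5_adj (f u) (f v))))"

definition degree :: "'a set \<Rightarrow> ('a \<Rightarrow> 'a \<Rightarrow> bool) \<Rightarrow> 'a \<Rightarrow> nat" where
  "degree V E v = card {u \<in> V. E v u}"

end

theory Submission
  imports Defs
begin

text \<open>Blow up the 5-cycle with cliques of sizes n, 1, n, 1, 1. The 2n + 2 vertices in the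
two big cliques and in the two singletons that meet only one big clique have degree n + 1,
while the singleton between the big cliques has degree 2n, so the sum is
(2n + 2)/(n + 1 + \<epsilon>) + 1/(2n + \<epsilon>). Its excess over 2 has the sign of
n + 1 + \<epsilon> - 4n\<epsilon> - 2\<epsilon>^2, which is positive for \<epsilon> = 1/4 + 1/(8n).\<close>

definition c5_class :: "'a set \<Rightarrow> ('a \<Rightarrow> nat) \<Rightarrow> nat \<Rightarrow> 'a set" where
  "c5_class V f x = {v \<in> V. f v = x}"

definition c5_blowup :: "'a set \<Rightarrow> ('a \<Rightarrow> nat) \<Rightarrow> 'a \<Rightarrow> 'a \<Rightarrow> bool" where
  "c5_blowup V f u v \<longleftrightarrow> u \<in> V \<and> v \<in> V \<and> u \<noteq> v \<and> (f u = f v \<or> c5_adj (f u) (f v))"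

definition c5_class_degree :: "'a set \<Rightarrow> ('a \<Rightarrow> nat) \<Rightarrow> nat \<Rightarrow> nat" where
  "c5_class_degree V f x =
     card (c5_class V f x) - 1 + card (c5_class V f ((x + 1) mod 5)) + card (c5_class V f ((x + 4) mod 5))"

lemma c5_adj_iff:
  assumes "x < 5"
  shows "c5_adj x y \<longleftrightarrow> y = (x + 1) mod 5 \<or> y = (x + 4) mod 5"
proof -
  consider "x = 0" | "x = 1" | "x = 2" | "x = 3" | "x = 4"
    using assms by linarith
  then show ?thesis
    unfolding c5_adj_def by (cases; simp; presburger)
qed

lemma blowup_C5_c5_blowup:
  assumes "finite V" "\<forall>v\<in>V. f v < 5" "\<forall>x<5. \<exists>v\<in>V. f v = x"
  shows "blowup_C5 V (c5_blowup V f)"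
  unfolding blowup_C5_def using assms by (auto simp: c5_blowup_def)

lemma degree_c5_blowup:
  assumes "finite V" "v \<in> V" "f v < 5"
  shows "degree V (c5_blowup V f) v = c5_class_degree V f (f v)"
proof -
  let ?Q = "c5_class V f"
  have neq: "f v \<noteq> (f v + 1) mod 5" "f v \<noteq> (f v + 4) mod 5" "(f v + 1) mod 5 \<noteq> (f v + 4) mod 5"
    by presburger+
  have "{u \<in> V. c5_blowup V f v u} = (?Q (f v) - {v}) \<union> ?Q ((f v + 1) mod 5) \<union> ?Q ((f v + 4) mod 5)"
    using assms(2,3) neq by (auto simp: c5_blowup_def c5_class_def c5_adj_iff)
  moreover have "finite (?Q x)" for x
    using assms(1) by (simp add: c5_class_def)
  ultimately show ?thesis
    using assms(2) neq unfolding degree_def c5_class_degree_def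
    by (simp add: card_Un_disjoint c5_class_def disjoint_iff)
qed

lemma sum_degree_c5_blowup:
  assumes "finite V" "\<forall>v\<in>V. f v < 5"
  shows "(\<Sum>v\<in>V. g (degree V (c5_blowup V f) v))
           = (\<Sum>x<5. of_nat (card (c5_class V f x)) * g (c5_class_degree V f x))"
proof -
  have "(\<Sum>v\<in>V. g (degree V (c5_blowup V f) v)) = (\<Sum>v\<in>V. g (c5_class_degree V f (f v)))"
    using assms by (simp add: degree_c5_blowup)
  also have "\<dots> = (\<Sum>x<5. \<Sum>v\<in>c5_class V f x. g (c5_class_degree V f (f v)))"
    using assms by (subst sum.group[symmetric, of V "{..<5}" f]) (auto simp: c5_class_def)
  also have "\<dots> = (\<Sum>x<5. of_nat (card (c5_class V f x)) * g (c5_class_degree V f x))"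
    by (rule sum.cong) (auto simp: c5_class_def)
  finally show ?thesis .
qed

definition unbalanced_class :: "nat \<Rightarrow> nat \<Rightarrow> nat" where
  "unbalanced_class n v =
     (if v < n then 0 else if v = n then 1 else if v \<le> 2*n then 2 else if v = 2*n + 1 then 3 else 4)"

lemma card_c5_class_unbalanced:
  assumes "x < 5"
  shows "card (c5_class {..<2*n + 3} (unbalanced_class n) x) = (if x = 0 \<or> x = 2 then n else 1)"
proof -
  have "x = 0 \<or> x = 1 \<or> x = 2 \<or> x = 3 \<or> x = 4" using assms by auto
  moreover have "c5_class {..<2*n + 3} (unbalanced_class n) 0 = {..<n}"
    and "c5_class {..<2*n + 3} (unbalanced_class n) 1 = {n}"
    and "c5_class {..<2*n + 3} (unbalanced_class n) 2 = {n<..2*n}"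
    and "c5_class {..<2*n + 3} (unbalanced_class n) 3 = {2*n + 1}"
    and "c5_class {..<2*n + 3} (unbalanced_class n) 4 = {2*n + 2}"
    by (auto simp: c5_class_def unbalanced_class_def)
  ultimately show ?thesis by auto
qed

lemma unbalanced_class_less: "unbalanced_class n v < 5"
  by (simp add: unbalanced_class_def)

lemma c5_class_degree_unbalanced:
  assumes "n \<ge> 1" "x < 5"
  shows "c5_class_degree {..<2*n + 3} (unbalanced_class n) x = (if x = 1 then 2*n else n + 1)"
proof -
  have "x = 0 \<or> x = 1 \<or> x = 2 \<or> x = 3 \<or> x = 4" using assms(2) by auto
  then show ?thesis
    using assms(1) by (elim disjE) (simp_all add: c5_class_degree_def card_c5_class_unbalanced)
qed

lemma blowup_C5_unbalanced:
  assumes "n \<ge> 1"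
  shows "blowup_C5 {..<2*n + 3} (c5_blowup {..<2*n + 3} (unbalanced_class n))"
proof (rule blowup_C5_c5_blowup)
  show "\<forall>x<5. \<exists>v\<in>{..<2*n + 3}. unbalanced_class n v = x"
  proof (intro allI impI)
    fix x :: nat
    assume "x < 5"
    then have "card (c5_class {..<2*n + 3} (unbalanced_class n) x) > 0"
      using assms card_c5_class_unbalanced[of x n] by simp
    then show "\<exists>v\<in>{..<2*n + 3}. unbalanced_class n v = x"
      by (auto simp: c5_class_def card_gt_0_iff)
  qed
qed (simp_all add: unbalanced_class_less)

lemma degree_unbalanced:
  assumes "n \<ge> 1" "v < 2*n + 3"
  shows "degree {..<2*n + 3} (c5_blowup {..<2*n + 3} (unbalanced_class n)) v
           = (if unbalanced_class n v = 1 then 2*n else n + 1)"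
  using assms by (simp add: degree_c5_blowup unbalanced_class_less c5_class_degree_unbalanced)

lemma sum_degree_unbalanced:
  fixes g :: "nat \<Rightarrow> 'b::semiring_1"
  assumes "n \<ge> 1"
  shows "(\<Sum>v<2*n + 3. g (degree {..<2*n + 3} (c5_blowup {..<2*n + 3} (unbalanced_class n)) v))
           = of_nat (2*n + 2) * g (n + 1) + g (2*n)"
proof -
  let ?V = "{..<2*n + 3}" and ?f = "unbalanced_class n"
  have "(\<Sum>v\<in>?V. g (degree ?V (c5_blowup ?V ?f) v))
          = (\<Sum>x<5. of_nat (card (c5_class ?V ?f x)) * g (c5_class_degree ?V ?f x))"
    by (simp add: sum_degree_c5_blowup unbalanced_class_less)
  also have "\<dots> = of_nat (2*n + 2) * g (n + 1) + g (2*n)"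
  proof -
    have sum_five: "(\<Sum>x<5. h x) = h 0 + h 1 + h 2 + h 3 + h 4" for h :: "nat \<Rightarrow> 'b"
      by (simp add: eval_nat_numeral)
    show ?thesis
      using assms by (simp add: sum_five card_c5_class_unbalanced c5_class_degree_unbalanced)
        (simp add: algebra_simps mult_2)
  qed
  finally show ?thesis .
qed

lemma unbalanced_sum_gt_two:
  fixes n :: real
  assumes "n \<ge> 1"
  defines "e \<equiv> 1/4 + 1/(8*n)"
  shows "2 < (2*n + 2) / (n + 1 + e) + 1 / (2*n + e)"
proof -
  have e_bounds: "1/4 < e" "e \<le> 3/8"
    using assms(1) by (auto simp: e_def field_simps)
  have "8 * n * e = 2 * n + 1"
    using assms(1) by (simp add: e_def field_simps)
  moreover have "2 * e * e < e"
    using e_bounds by (simp add: mult_strict_right_mono)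
  ultimately have "2 * ((n + 1 + e) * (2*n + e)) < (2*n + 2) * (2*n + e) + (n + 1 + e)"
    by (simp add: algebra_simps)
  moreover have "0 < n + 1 + e" "0 < 2*n + e"
    using assms(1) e_bounds by linarith+
  ultimately show ?thesis
    by (simp add: add_frac_eq less_divide_eq)
qed

theorem proposition4p2:
  fixes \<delta> :: nat
  shows "\<exists>(\<epsilon>::real) (V::nat set) E. \<epsilon> > 1/4 \<and> blowup_C5 V E \<and>
           (\<forall>v\<in>V. degree V E v \<ge> \<delta>) \<and>
           (\<Sum>v\<in>V. 1 / (real (degree V E v) + \<epsilon>)) > 2"
proof -
  define n where "n = \<delta> + 1"
  define e where "e = 1/4 + 1/(8 * real n)"
  define V where "V = {..<2*n + 3}"
  define E where "E = c5_blowup V (unbalanced_class n)"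
  have "n \<ge> 1"
    by (simp add: n_def)
  have "blowup_C5 V E"
    using blowup_C5_unbalanced[OF \<open>n \<ge> 1\<close>] by (simp add: V_def E_def)
  moreover have "\<forall>v\<in>V. \<delta> \<le> degree V E v"
    using degree_unbalanced[OF \<open>n \<ge> 1\<close>] by (simp add: V_def E_def n_def)
  moreover have "2 < (\<Sum>v\<in>V. 1 / (real (degree V E v) + e))"
  proof -
    have "2 < (2 * real n + 2) / (real n + 1 + e) + 1 / (2 * real n + e)"
      unfolding e_def using \<open>n \<ge> 1\<close> by (intro unbalanced_sum_gt_two) simp
    also have "\<dots> = (\<Sum>v\<in>V. 1 / (real (degree V E v) + e))"
      using sum_degree_unbalanced[OF \<open>n \<ge> 1\<close>, of "\<lambda>k. 1 / (real k + e)"]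
      by (simp add: V_def E_def add_ac)
    finally show ?thesis .
  qed
  moreover have "e > 1/4"
    by (simp add: e_def n_def)
  ultimately show ?thesis
    by blast
qed

end
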